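(* Let $(M_1,f_1,g_1)$ and $(M_2,f_2,g_2)$ be $(m,n)$-hypermodules over a commutative Krasner $(m,n)$-hyperring $(R,f',g')$ with scalar identity $1$, let $Q_1$ and $Q_2$ be $n$-ary weakly classical prime subhypermodules of $M_1$ and $M_2$ respectively, and let $h:M_1\to M_2$ be a homomorphism. Then: (1) if $h$ is an epimorphism and $\mathrm{Ker}(h)\subseteq Q_1$, then $h(Q_1)$ is an $n$-ary weakly classical prime subhypermodule of $M_2$; (2) if $h$ is a monomorphism with $h^{-1}(Q_2)\neq M_1$, then $h^{-1}(Q_2)$ is an $n$-ary weakly classical prime subhypermodule of $M_1$.
   Context: A commutative Krasner $(m,n)$-hyperring with scalar identity $1$ is a triple $(R,f',g')$ where $(R,f')$ is a canonical $m$-ary hypergroup with zero $0$, $(R,g')$ is a commutative $n$-ary semigroup, $g'$ is distributive over $f'$, $0$ is a zero element for $g'$, and $g'(x,1^{(n-1)})=x$. Notation: $x_i^j$ denotes $x_i,\dots,x_j$ and $x^{(k)}$ denotes $x$ repeated $k$ times. An $(m,n)$-hypermodule over $R$ is a triple $(M,f,g)$ with $(M,f)$ a canonical $m$-ary hypergroup with zero $0$ and $g:R^{n-1}\times M\to P^*(M)$ satisfying: $g(r_1^{n-1},f(x_1^m))=f(g(r_1^{n-1},x_1),\dots,g(r_1^{n-1},x_m))$; $g(r_1^{i-1},f'(s_1^m),r_{i+1}^{n-1},x)=f(g(r_1^{i-1},s_1,r_{i+1}^{n-1},x),\dots,g(r_1^{i-1},s_m,r_{i+1}^{n-1},x))$;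 $g(r_1^{i-1},g'(r_i^{i+n-1}),r_{i+n}^{2n-2},x)=g(r_1^{n-1},g(r_n^{2n-2},x))$; $g(r_1^{i-1},0,r_{i+1}^{n-1},x)=\{0\}$; moreover $g(1^{(n-1)},a)=\{a\}$. A subhypermodule is a nonempty subset $N$ with $(N,f)$ an $m$-ary subhypergroup and $g(R^{(n-1)},N)\subseteq N$. A proper subhypermodule $Q$ of $M$ is $n$-ary weakly classical prime if for $r_1^{n-1}\in R$, $a\in M$, $0\notin g(r_1^{n-1},a)\subseteq Q$ implies $g(r_i,1^{(n-2)},a)\subseteq Q$ for some $1\le i\le n-1$. A homomorphism $h:M_1\to M_2$ is a map with $h(f_1(a_1^m))=f_2(h(a_1),\dots,h(a_m))$ and $h(g_1(r_1^{n-1},a))=g_2(r_1^{n-1},h(a))$ for all $a_1^m,a\in M_1$, $r_1^{n-1}\in R$; $\mathrm{Ker}(h)=\{a\in M_1:h(a)=0\}$; epimorphism means surjective, monomorphism injective. *)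

theory Defs
  imports Main "HOL-Library.Multiset"
begin

text \<open>Carriers are modelled by whole types: the hyperring R is the type 'r,
 the hypermodules are types 'a, 'b.  An m-ary hyperoperation is a function on lists
 (meaningful for lists of length m) returning a set; an n-ary operation returns an element.\<close>

definition lift :: "('a list \<Rightarrow> 'a set) \<Rightarrow> 'a set list \<Rightarrow> 'a set" where
  "lift f Xs = \<Union> {f xs | xs. list_all2 (\<in>) xs Xs}"

text \<open>f(x_1^(i), f(x_(i+1)^(i+m)), x_(i+m+1)^(2m-1)), with 0-based position i.\<close>
definition nested_hop :: "('a list \<Rightarrow> 'a set) \<Rightarrow> nat \<Rightarrow> 'a list \<Rightarrow> nat \<Rightarrow> 'a set" where
  "nested_hop f m xs i =
     lift f (map (\<lambda>x. {x}) (take i xs) @ [f (take m (drop i xs))] @ map (\<lambda>x. {x}) (drop (i + m) xs))"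

definition hop_assoc :: "('a list \<Rightarrow> 'a set) \<Rightarrow> nat \<Rightarrow> bool" where
  "hop_assoc f m \<longleftrightarrow> (\<forall>xs i j. length xs = 2*m - 1 \<and> i < m \<and> j < m \<longrightarrow>
       nested_hop f m xs i = nested_hop f m xs j)"

definition hinv :: "('a list \<Rightarrow> 'a set) \<Rightarrow> nat \<Rightarrow> 'a \<Rightarrow> 'a \<Rightarrow> 'a" where
  "hinv f m z x = (THE y. z \<in> f (x # y # replicate (m - 2) z))"

definition canonical_mary_hypergroup :: "('a list \<Rightarrow> 'a set) \<Rightarrow> nat \<Rightarrow> 'a \<Rightarrow> bool" where
  "canonical_mary_hypergroup f m z \<longleftrightarrow>
     2 \<le> m \<and>
     (\<forall>xs. length xs = m \<longrightarrow> f xs \<noteq> {}) \<and>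
     hop_assoc f m \<and>
     (\<forall>x. f (x # replicate (m - 1) z) = {x}) \<and>
     (\<forall>e. (\<forall>x. f (x # replicate (m - 1) e) = {x}) \<longrightarrow> e = z) \<and>
     (\<forall>x. \<exists>!y. z \<in> f (x # y # replicate (m - 2) z)) \<and>
     (\<forall>xs x i. length xs = m \<and> i < m \<and> x \<in> f xs \<longrightarrow>
        xs ! i \<in> f ((map (hinv f m z) xs)[i := x])) \<and>
     (\<forall>xs ys. length xs = m \<and> mset xs = mset ys \<longrightarrow> f xs = f ys)"

definition nary_semigroup :: "('r list \<Rightarrow> 'r) \<Rightarrow> nat \<Rightarrow> bool" where
  "nary_semigroup g n \<longleftrightarrow> (\<forall>xs i j. length xs = 2*n - 1 \<and> i < n \<and> j < n \<longrightarrow>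
      g (take i xs @ [g (take n (drop i xs))] @ drop (i + n) xs) =
      g (take j xs @ [g (take n (drop j xs))] @ drop (j + n) xs))"

definition comm_krasner_hyperring ::
  "('r list \<Rightarrow> 'r set) \<Rightarrow> ('r list \<Rightarrow> 'r) \<Rightarrow> nat \<Rightarrow> nat \<Rightarrow> 'r \<Rightarrow> 'r \<Rightarrow> bool" where
  "comm_krasner_hyperring f g m n z one \<longleftrightarrow>
     2 \<le> n \<and>
     canonical_mary_hypergroup f m z \<and>
     nary_semigroup g n \<and>
     (\<forall>xs ys. length xs = n \<and> mset xs = mset ys \<longrightarrow> g xs = g ys) \<and>
     (\<forall>as bs xs. length as + length bs = n - 1 \<and> length xs = m \<longrightarrow>
        (\<lambda>y. g (as @ [y] @ bs)) ` f xs = f (map (\<lambda>x. g (as @ [x] @ bs)) xs)) \<and>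
     (\<forall>as bs. length as + length bs = n - 1 \<longrightarrow> g (as @ [z] @ bs) = z) \<and>
     (\<forall>x. g (x # replicate (n - 1) one) = x)"

definition mn_hypermodule ::
  "('r list \<Rightarrow> 'r set) \<Rightarrow> ('r list \<Rightarrow> 'r) \<Rightarrow> nat \<Rightarrow> nat \<Rightarrow> 'r \<Rightarrow> 'r \<Rightarrow>
   ('a list \<Rightarrow> 'a set) \<Rightarrow> ('r list \<Rightarrow> 'a \<Rightarrow> 'a set) \<Rightarrow> 'a \<Rightarrow> bool" where
  "mn_hypermodule fR gR m n zR oneR f g z \<longleftrightarrow>
     canonical_mary_hypergroup f m z \<and>
     (\<forall>rs x. length rs = n - 1 \<longrightarrow> g rs x \<noteq> {}) \<and>
     (\<forall>rs xs. length rs = n - 1 \<and> length xs = m \<longrightarrow>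
        (\<Union>y\<in>f xs. g rs y) = lift f (map (g rs) xs)) \<and>
     (\<forall>as bs ss x. length as + length bs = n - 2 \<and> length ss = m \<longrightarrow>
        (\<Union>s\<in>fR ss. g (as @ [s] @ bs) x) = lift f (map (\<lambda>s. g (as @ [s] @ bs) x) ss)) \<and>
     (\<forall>rs i x. length rs = 2*n - 2 \<and> i < n - 1 \<longrightarrow>
        g (take i rs @ [gR (take n (drop i rs))] @ drop (i + n) rs) x =
        (\<Union>y\<in>g (drop (n - 1) rs) x. g (take (n - 1) rs) y)) \<and>
     (\<forall>as bs x. length as + length bs = n - 2 \<longrightarrow> g (as @ [zR] @ bs) x = {z}) \<and>
     (\<forall>a. g (replicate (n - 1) oneR) a = {a})"

definition mary_subhypergroup :: "('a list \<Rightarrow> 'a set) \<Rightarrow> nat \<Rightarrow> 'a set \<Rightarrow> bool" where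
  "mary_subhypergroup f m N \<longleftrightarrow>
     N \<noteq> {} \<and>
     (\<forall>xs. length xs = m \<and> set xs \<subseteq> N \<longrightarrow> f xs \<subseteq> N) \<and>
     (\<forall>a xs i. a \<in> N \<and> length xs = m \<and> set xs \<subseteq> N \<and> i < m \<longrightarrow>
        (\<exists>y\<in>N. a \<in> f (xs[i := y])))"

definition subhypermodule ::
  "nat \<Rightarrow> nat \<Rightarrow> ('a list \<Rightarrow> 'a set) \<Rightarrow> ('r list \<Rightarrow> 'a \<Rightarrow> 'a set) \<Rightarrow> 'a set \<Rightarrow> bool" where
  "subhypermodule m n f g N \<longleftrightarrow>
     N \<noteq> {} \<and> mary_subhypergroup f m N \<and>
     (\<forall>rs x. length rs = n - 1 \<and> x \<in> N \<longrightarrow> g rs x \<subseteq> N)"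

definition nary_weakly_classical_prime ::
  "nat \<Rightarrow> nat \<Rightarrow> 'r \<Rightarrow> ('a list \<Rightarrow> 'a set) \<Rightarrow> ('r list \<Rightarrow> 'a \<Rightarrow> 'a set) \<Rightarrow> 'a \<Rightarrow> 'a set \<Rightarrow> bool" where
  "nary_weakly_classical_prime m n oneR f g z Q \<longleftrightarrow>
     subhypermodule m n f g Q \<and> Q \<noteq> UNIV \<and>
     (\<forall>rs a. length rs = n - 1 \<and> z \<notin> g rs a \<and> g rs a \<subseteq> Q \<longrightarrow>
        (\<exists>i < n - 1. g (rs ! i # replicate (n - 2) oneR) a \<subseteq> Q))"

definition hypermodule_hom ::
  "nat \<Rightarrow> nat \<Rightarrow> ('a list \<Rightarrow> 'a set) \<Rightarrow> ('r list \<Rightarrow> 'a \<Rightarrow> 'a set) \<Rightarrow>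
   ('b list \<Rightarrow> 'b set) \<Rightarrow> ('r list \<Rightarrow> 'b \<Rightarrow> 'b set) \<Rightarrow> ('a \<Rightarrow> 'b) \<Rightarrow> bool" where
  "hypermodule_hom m n f1 g1 f2 g2 h \<longleftrightarrow>
     (\<forall>xs. length xs = m \<longrightarrow> h ` f1 xs = f2 (map h xs)) \<and>
     (\<forall>rs a. length rs = n - 1 \<longrightarrow> h ` g1 rs a = g2 rs (h a))"

definition Ker :: "('a \<Rightarrow> 'b) \<Rightarrow> 'b \<Rightarrow> 'a set" where
  "Ker h z2 = {a. h a = z2}"

end

theory Submission
  imports Defs
begin

text \<open>Images and preimages of subhypermodules under a homomorphism h are again
  subhypermodules, because h commutes with the hyperoperation, the scalar action, the zero and
  the inverses.  The weakly classical prime condition is transported along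
  h(g(r, a)) = g(r, h a).  For the image, the condition on Q1 can be pulled back because
  Ker h \<subseteq> Q1 makes Q1 saturated: if h a = h q with q \<in> Q1, then a \<in> f(k, q, 0, \<dots>, 0)
  for some k \<in> f(a, -q, 0, \<dots>, 0) in the kernel.  For the preimage, injectivity of h is what
  keeps 0 out of g(r, a).\<close>

locale canonical_hypergroup =
  fixes f :: "'a list \<Rightarrow> 'a set" and m :: nat and z :: 'a
  assumes canonical: "canonical_mary_hypergroup f m z"
begin

abbreviation neg :: "'a \<Rightarrow> 'a" where
  "neg \<equiv> hinv f m z"

lemma arity: "2 \<le> m"
  using canonical unfolding canonical_mary_hypergroup_def by (elim conjE) blast

lemma nonempty: "length xs = m \<Longrightarrow> f xs \<noteq> {}"
  using canonical unfolding canonical_mary_hypergroup_def by (elim conjE) blast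

lemma zero_neutral: "f (x # replicate (m - 1) z) = {x}"
  using canonical unfolding canonical_mary_hypergroup_def by (elim conjE) blast

lemma ex1_inverse: "\<exists>!y. z \<in> f (x # y # replicate (m - 2) z)"
  using canonical unfolding canonical_mary_hypergroup_def by (elim conjE) blast

lemma reversible: "length xs = m \<Longrightarrow> i < m \<Longrightarrow> x \<in> f xs \<Longrightarrow> xs ! i \<in> f ((map neg xs)[i := x])"
  using canonical unfolding canonical_mary_hypergroup_def by (elim conjE) blast

lemma commute: "length xs = m \<Longrightarrow> mset xs = mset ys \<Longrightarrow> f xs = f ys"
  using canonical unfolding canonical_mary_hypergroup_def by (elim conjE) blast

lemma zero_mem_neg: "z \<in> f (x # neg x # replicate (m - 2) z)"
  unfolding hinv_def by (rule theI' [OF ex1_inverse])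

lemma neg_unique: "z \<in> f (x # y # replicate (m - 2) z) \<Longrightarrow> neg x = y"
  unfolding hinv_def by (rule the1_equality [OF ex1_inverse])

lemma neg_neg [simp]: "neg (neg x) = x"
proof (rule neg_unique)
  have "f (x # neg x # replicate (m - 2) z) = f (neg x # x # replicate (m - 2) z)"
    using arity by (intro commute) auto
  then show "z \<in> f (neg x # x # replicate (m - 2) z)"
    using zero_mem_neg [of x] by simp
qed

lemma neg_zero [simp]: "neg z = z"
proof (rule neg_unique)
  have "z # replicate (m - 2) z = replicate (m - 1) z"
    using arity by (simp add: replicate_Suc [symmetric] Suc_diff_Suc numeral_2_eq_2)
  then show "z \<in> f (z # z # replicate (m - 2) z)"
    using zero_neutral [of z] by simp
qed

lemma reproduction_via_neg:
  assumes "length xs = m" and "i < m"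
  shows "\<exists>y \<in> f ((map neg xs)[i := a]). a \<in> f (xs[i := y])"
proof -
  let ?ys = "(map neg xs)[i := a]"
  obtain y where y: "y \<in> f ?ys"
    using nonempty [of ?ys] assms(1) by auto
  have "?ys ! i \<in> f ((map neg ?ys)[i := y])"
    using reversible [OF _ assms(2) y] assms(1) by simp
  moreover have "(map neg ?ys)[i := y] = xs[i := y]"
    by (simp add: map_update comp_def)
  ultimately show ?thesis
    using y assms by auto
qed

lemma subhypergroup_neg_closed:
  assumes N: "mary_subhypergroup f m N" and "z \<in> N" and "x \<in> N"
  shows "neg x \<in> N"
proof -
  let ?xs = "x # replicate (m - 1) z"
  have "length ?xs = m" "set ?xs \<subseteq> N" "1 < m"
    using arity assms(2,3) by auto
  then obtain y where y: "y \<in> N" "z \<in> f (?xs[1 := y])"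
    using N assms(2) unfolding mary_subhypergroup_def by blast
  moreover have "?xs[1 := y] = x # y # replicate (m - 2) z"
    using arity by (cases "m - 1") auto
  ultimately show ?thesis
    using neg_unique by metis
qed

end

lemma subhypermodule_hop_closed:
  "subhypermodule m n f g N \<Longrightarrow> length xs = m \<Longrightarrow> set xs \<subseteq> N \<Longrightarrow> f xs \<subseteq> N"
  unfolding subhypermodule_def mary_subhypergroup_def by blast

lemma subhypermodule_reproductive:
  "subhypermodule m n f g N \<Longrightarrow> a \<in> N \<Longrightarrow> length xs = m \<Longrightarrow> set xs \<subseteq> N \<Longrightarrow> i < m \<Longrightarrow>
    \<exists>y\<in>N. a \<in> f (xs[i := y])"
  unfolding subhypermodule_def mary_subhypergroup_def by blast

lemma subhypermodule_scalar_closed: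
  "subhypermodule m n f g N \<Longrightarrow> length rs = n - 1 \<Longrightarrow> x \<in> N \<Longrightarrow> g rs x \<subseteq> N"
  unfolding subhypermodule_def by blast

lemma subhypermoduleI:
  assumes "N \<noteq> {}"
    and "\<And>xs. length xs = m \<Longrightarrow> set xs \<subseteq> N \<Longrightarrow> f xs \<subseteq> N"
    and "\<And>a xs i. a \<in> N \<Longrightarrow> length xs = m \<Longrightarrow> set xs \<subseteq> N \<Longrightarrow> i < m \<Longrightarrow>
      \<exists>y\<in>N. a \<in> f (xs[i := y])"
    and "\<And>rs x. length rs = n - 1 \<Longrightarrow> x \<in> N \<Longrightarrow> g rs x \<subseteq> N"
  shows "subhypermodule m n f g N"
  using assms unfolding subhypermodule_def mary_subhypergroup_def by blast

locale hypermodule = canonical_hypergroup f m z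
  for fR :: "'r list \<Rightarrow> 'r set" and gR :: "'r list \<Rightarrow> 'r"
    and m n :: nat and zR oneR :: 'r
    and f :: "'a list \<Rightarrow> 'a set" and g :: "'r list \<Rightarrow> 'a \<Rightarrow> 'a set" and z :: 'a +
  assumes hypermodule: "mn_hypermodule fR gR m n zR oneR f g z"
    and scalar_arity: "2 \<le> n"
begin

lemma scalar_zero: "g (zR # replicate (n - 2) oneR) a = {z}"
proof -
  have "\<forall>as bs x. length as + length bs = n - 2 \<longrightarrow> g (as @ [zR] @ bs) x = {z}"
    using hypermodule unfolding mn_hypermodule_def by blast
  from this [rule_format, of "[]" "replicate (n - 2) oneR" a] show ?thesis
    by simp
qed

lemma subhypermodule_zero_mem:
  assumes N: "subhypermodule m n f g N"
  shows "z \<in> N"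
proof -
  obtain q where "q \<in> N"
    using N unfolding subhypermodule_def by blast
  moreover have "length (zR # replicate (n - 2) oneR) = n - 1"
    using scalar_arity by simp
  ultimately show ?thesis
    using subhypermodule_scalar_closed [OF N] scalar_zero by blast
qed

end

lemma hypermoduleI:
  "comm_krasner_hyperring fR gR m n zR oneR \<Longrightarrow> mn_hypermodule fR gR m n zR oneR f g z \<Longrightarrow>
    hypermodule fR gR m n zR oneR f g z"
  unfolding hypermodule_def canonical_hypergroup_def hypermodule_axioms_def
    comm_krasner_hyperring_def mn_hypermodule_def
  by blast

lemma hypermodule_hom_hop:
  "hypermodule_hom m n f1 g1 f2 g2 h \<Longrightarrow> length xs = m \<Longrightarrow> h ` f1 xs = f2 (map h xs)"
  unfolding hypermodule_hom_def by blast

lemma hypermodule_hom_scalar: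
  "hypermodule_hom m n f1 g1 f2 g2 h \<Longrightarrow> length rs = n - 1 \<Longrightarrow> h ` g1 rs a = g2 rs (h a)"
  unfolding hypermodule_hom_def by blast

lemma set_subset_imageE:
  assumes "set xs \<subseteq> h ` N"
  obtains ys where "xs = map h ys" and "set ys \<subseteq> N"
proof -
  have "xs \<in> map h ` lists N"
    using assms unfolding lists_image [symmetric] by (simp add: in_lists_conv_set subset_iff)
  then show ?thesis
    using that by (auto simp: in_lists_conv_set subset_iff)
qed

lemma subhypermodule_image:
  fixes h :: "'a \<Rightarrow> 'b" and g1 :: "'r list \<Rightarrow> 'a \<Rightarrow> 'a set"
  assumes hom: "hypermodule_hom m n f1 g1 f2 g2 h" and N: "subhypermodule m n f1 g1 N"
  shows "subhypermodule m n f2 g2 (h ` N)"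
proof (rule subhypermoduleI)
  show "h ` N \<noteq> {}"
    using N unfolding subhypermodule_def by simp
next
  fix xs assume xs: "length xs = m" "set xs \<subseteq> h ` N"
  obtain ys where ys: "xs = map h ys" "set ys \<subseteq> N"
    using set_subset_imageE [OF xs(2)] by blast
  then have "h ` f1 ys \<subseteq> h ` N"
    using xs subhypermodule_hop_closed [OF N] by (intro image_mono) simp
  then show "f2 xs \<subseteq> h ` N"
    using xs ys hypermodule_hom_hop [OF hom, of ys] by simp
next
  fix a xs i assume a: "a \<in> h ` N" and xs: "length xs = m" "set xs \<subseteq> h ` N" and i: "i < m"
  obtain a' where a': "a' \<in> N" "a = h a'"
    using a by blast
  obtain ys where ys: "xs = map h ys" "set ys \<subseteq> N"
    using set_subset_imageE [OF xs(2)] by blast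
  obtain y where y: "y \<in> N" "a' \<in> f1 (ys[i := y])"
    using subhypermodule_reproductive [OF N a'(1) _ ys(2) i] xs(1) ys(1) by auto
  have "a \<in> h ` f1 (ys[i := y])"
    using a' y by blast
  also have "\<dots> = f2 (xs[i := h y])"
    using hypermodule_hom_hop [OF hom, of "ys[i := y]"] xs(1) ys(1) by (simp add: map_update)
  finally show "\<exists>y\<in>h ` N. a \<in> f2 (xs[i := y])"
    using y by blast
next
  fix rs :: "'r list" and x assume "length rs = n - 1" "x \<in> h ` N"
  then show "g2 rs x \<subseteq> h ` N"
    using subhypermodule_scalar_closed [OF N] hypermodule_hom_scalar [OF hom] by blast
qed

locale hypermodule_homomorphism =
  M1: hypermodule fR gR m n zR oneR f1 g1 z1 + M2: hypermodule fR gR m n zR oneR f2 g2 z2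
  for fR :: "'r list \<Rightarrow> 'r set" and gR :: "'r list \<Rightarrow> 'r"
    and m n :: nat and zR oneR :: 'r
    and f1 :: "'a list \<Rightarrow> 'a set" and g1 :: "'r list \<Rightarrow> 'a \<Rightarrow> 'a set" and z1 :: 'a
    and f2 :: "'b list \<Rightarrow> 'b set" and g2 :: "'r list \<Rightarrow> 'b \<Rightarrow> 'b set" and z2 :: 'b +
  fixes h :: "'a \<Rightarrow> 'b"
  assumes hom: "hypermodule_hom m n f1 g1 f2 g2 h"
begin

lemmas hom_hop = hypermodule_hom_hop [OF hom]
  and hom_scalar = hypermodule_hom_scalar [OF hom]

lemma hom_zero: "h z1 = z2"
proof -
  let ?rs = "zR # replicate (n - 2) oneR"
  have "length ?rs = n - 1"
    using M1.scalar_arity by simp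
  then show ?thesis
    using hom_scalar [of ?rs z1] M1.scalar_zero M2.scalar_zero by simp
qed

lemma hom_neg: "h (M1.neg x) = M2.neg (h x)"
proof (rule M2.neg_unique [symmetric])
  let ?xs = "x # M1.neg x # replicate (m - 2) z1"
  have "z2 \<in> h ` f1 ?xs"
    using M1.zero_mem_neg hom_zero by blast
  then show "z2 \<in> f2 (h x # h (M1.neg x) # replicate (m - 2) z2)"
    using hom_hop [of ?xs] M1.arity hom_zero by simp
qed

lemma subhypermodule_vimage:
  assumes N: "subhypermodule m n f2 g2 N"
  shows "subhypermodule m n f1 g1 (h -` N)"
proof (rule subhypermoduleI)
  show "h -` N \<noteq> {}"
    using M2.subhypermodule_zero_mem [OF N] hom_zero by blast
next
  fix xs assume xs: "length xs = m" "set xs \<subseteq> h -` N"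
  have "f2 (map h xs) \<subseteq> N"
    by (rule subhypermodule_hop_closed [OF N]) (use xs in auto)
  then have "h ` f1 xs \<subseteq> N"
    using hom_hop [OF xs(1)] by simp
  then show "f1 xs \<subseteq> h -` N"
    by blast
next
  fix a xs i assume a: "a \<in> h -` N" and xs: "length xs = m" "set xs \<subseteq> h -` N" and i: "i < m"
  let ?ys = "(map M1.neg xs)[i := a]"
  obtain y where y: "y \<in> f1 ?ys" "a \<in> f1 (xs[i := y])"
    using M1.reproduction_via_neg [OF xs(1) i] by blast
  have "M2.neg (h x) \<in> N" if "x \<in> set xs" for x
    using N M2.subhypermodule_zero_mem [OF N] xs(2) that
    unfolding subhypermodule_def by (blast intro: M2.subhypergroup_neg_closed)
  moreover have "map h ?ys = (map (\<lambda>x. M2.neg (h x)) xs)[i := h a]"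
    by (simp add: map_update hom_neg comp_def)
  ultimately have "set (map h ?ys) \<subseteq> N"
    using a set_update_subset_insert [of "map (\<lambda>x. M2.neg (h x)) xs" i "h a"] by auto
  then have "h ` f1 ?ys \<subseteq> N"
    using subhypermodule_hop_closed [OF N] xs(1) hom_hop [of ?ys] by simp
  then show "\<exists>y\<in>h -` N. a \<in> f1 (xs[i := y])"
    using y by blast
next
  fix rs :: "'r list" and x assume rs: "length rs = n - 1" and x: "x \<in> h -` N"
  have "g2 rs (h x) \<subseteq> N"
    using subhypermodule_scalar_closed [OF N rs] x by simp
  then show "g1 rs x \<subseteq> h -` N"
    using hom_scalar [OF rs, of x] by auto
qed

lemma Ker_subset_vimage_image_eq:
  assumes N: "subhypermodule m n f1 g1 N" and ker: "Ker h z2 \<subseteq> N"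
  shows "h -` h ` N = N"
proof
  show "h -` h ` N \<subseteq> N"
  proof
    fix a assume "a \<in> h -` h ` N"
    then obtain q where q: "q \<in> N" "h a = h q"
      by blast
    let ?xs = "a # M1.neg q # replicate (m - 2) z1"
    have len: "length ?xs = m"
      using M1.arity by simp
    have "z2 \<in> f2 (h q # M2.neg (h q) # replicate (m - 2) z2)"
      by (rule M2.zero_mem_neg)
    also have "\<dots> = h ` f1 ?xs"
      using q(2) hom_zero hom_neg [of q] hom_hop [OF len] by simp
    finally obtain k where k: "k \<in> f1 ?xs" "h k = z2"
      by blast
    have "?xs ! 0 \<in> f1 ((map M1.neg ?xs)[0 := k])"
      using M1.reversible [OF len _ k(1), of 0] M1.arity by simp
    then have "a \<in> f1 (k # q # replicate (m - 2) z1)"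
      by simp
    moreover have "k \<in> N"
      using ker k(2) unfolding Ker_def by blast
    with q(1) have "f1 (k # q # replicate (m - 2) z1) \<subseteq> N"
      using M1.subhypermodule_zero_mem [OF N] M1.arity by (intro subhypermodule_hop_closed [OF N]) auto
    ultimately show "a \<in> N"
      by blast
  qed
qed blast

lemma weakly_classical_prime_image:
  assumes Q: "nary_weakly_classical_prime m n oneR f1 g1 z1 Q"
    and h_surj: "surj h" and ker: "Ker h z2 \<subseteq> Q"
  shows "nary_weakly_classical_prime m n oneR f2 g2 z2 (h ` Q)"
proof -
  have sub: "subhypermodule m n f1 g1 Q" and proper: "Q \<noteq> UNIV"
    using Q unfolding nary_weakly_classical_prime_def by blast+
  have vimage_image: "h -` h ` Q = Q"
    using Ker_subset_vimage_image_eq [OF sub ker] .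
  show ?thesis
    unfolding nary_weakly_classical_prime_def
  proof (intro conjI allI impI)
    show "subhypermodule m n f2 g2 (h ` Q)"
      using subhypermodule_image [OF hom sub] .
    show "h ` Q \<noteq> UNIV"
      using proper vimage_image by auto
  next
    fix rs b assume b: "length rs = n - 1 \<and> z2 \<notin> g2 rs b \<and> g2 rs b \<subseteq> h ` Q"
    obtain a where a: "b = h a"
      using h_surj by (metis surjD)
    have image: "h ` g1 rs a = g2 rs b"
      using b hom_scalar a by simp
    have "z1 \<notin> g1 rs a"
      using b image hom_zero by (metis image_eqI)
    moreover have "g1 rs a \<subseteq> h -` h ` Q"
      using b image by blast
    then have "g1 rs a \<subseteq> Q"
      unfolding vimage_image .
    ultimately obtain i where i: "i < n - 1" "g1 (rs ! i # replicate (n - 2) oneR) a \<subseteq> Q"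
      using Q b unfolding nary_weakly_classical_prime_def by blast
    moreover have "length (rs ! i # replicate (n - 2) oneR) = n - 1"
      using M1.scalar_arity by simp
    ultimately show "\<exists>i<n - 1. g2 (rs ! i # replicate (n - 2) oneR) b \<subseteq> h ` Q"
      using hom_scalar a by (metis image_mono)
  qed
qed

lemma weakly_classical_prime_vimage:
  assumes Q: "nary_weakly_classical_prime m n oneR f2 g2 z2 Q"
    and h_inj: "inj h" and proper: "h -` Q \<noteq> UNIV"
  shows "nary_weakly_classical_prime m n oneR f1 g1 z1 (h -` Q)"
  unfolding nary_weakly_classical_prime_def
proof (intro conjI allI impI proper)
  show "subhypermodule m n f1 g1 (h -` Q)"
    using Q subhypermodule_vimage unfolding nary_weakly_classical_prime_def by blast
next
  fix rs a assume a: "length rs = n - 1 \<and> z1 \<notin> g1 rs a \<and> g1 rs a \<subseteq> h -` Q"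
  then have image: "g2 rs (h a) = h ` g1 rs a"
    using hom_scalar by simp
  have "z2 \<notin> g2 rs (h a)"
    using a h_inj hom_zero unfolding image by (metis imageE injD)
  moreover have "g2 rs (h a) \<subseteq> Q"
    using a unfolding image by auto
  ultimately obtain i where i: "i < n - 1" "g2 (rs ! i # replicate (n - 2) oneR) (h a) \<subseteq> Q"
    using Q a unfolding nary_weakly_classical_prime_def by blast
  moreover have "length (rs ! i # replicate (n - 2) oneR) = n - 1"
    using M1.scalar_arity by simp
  ultimately show "\<exists>i<n - 1. g1 (rs ! i # replicate (n - 2) oneR) a \<subseteq> h -` Q"
    using hom_scalar by blast
qed

end

theorem mainTheorem6:
  fixes fR :: "'r list \<Rightarrow> 'r set" and gR :: "'r list \<Rightarrow> 'r"
    and f1 :: "'a list \<Rightarrow> 'a set" and g1 :: "'r list \<Rightarrow> 'a \<Rightarrow> 'a set"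
    and f2 :: "'b list \<Rightarrow> 'b set" and g2 :: "'r list \<Rightarrow> 'b \<Rightarrow> 'b set"
    and h :: "'a \<Rightarrow> 'b"
  assumes R: "comm_krasner_hyperring fR gR m n zR oneR"
    and M1: "mn_hypermodule fR gR m n zR oneR f1 g1 z1"
    and M2: "mn_hypermodule fR gR m n zR oneR f2 g2 z2"
    and Q1: "nary_weakly_classical_prime m n oneR f1 g1 z1 Q1"
    and Q2: "nary_weakly_classical_prime m n oneR f2 g2 z2 Q2"
    and hom: "hypermodule_hom m n f1 g1 f2 g2 h"
  shows "(surj h \<and> Ker h z2 \<subseteq> Q1 \<longrightarrow> nary_weakly_classical_prime m n oneR f2 g2 z2 (h ` Q1)) \<and>
         (inj h \<and> h -` Q2 \<noteq> UNIV \<longrightarrow> nary_weakly_classical_prime m n oneR f1 g1 z1 (h -` Q2))"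
proof -
  interpret hypermodule_homomorphism fR gR m n zR oneR f1 g1 z1 f2 g2 z2 h
    using hypermoduleI [OF R M1] hypermoduleI [OF R M2] hom
    by (simp add: hypermodule_homomorphism_def hypermodule_homomorphism_axioms_def)
  show ?thesis
    using weakly_classical_prime_image [OF Q1] weakly_classical_prime_vimage [OF Q2] by blast
qed

end
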